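(* Let $\alpha\in(0,2)$, let $\Pi(u)=(1-u)\exp\big(-\frac{u}{1-u}\big)$ for $0\le u<1$, and for a function $g:[0,\infty)\to[0,1/\alpha)$ define $$Q[g](x)=\frac12\int_0^\infty\!\!\int_{-1}^1\Big(g(x')g(y')\Pi(\alpha g(x))\Pi(\alpha g(y))-g(x)g(y)\Pi(\alpha g(x'))\Pi(\alpha g(y'))\Big)\,d\xi\,dy,$$ where $x'=(1-\xi)\frac{x+y}{2}$ and $y'=(1+\xi)\frac{x+y}2$ (assuming all integrals below converge). Then: (i) for any $a,b\in\mathbb{R}$ and any such $g$ with $\int_0^\infty xg(x)\,dx=1$, $\int_0^\infty(a+bx)Q[g](x)\,dx=0$; (ii) with $\phi(\xi)=(1-\frac\alpha2)\log\frac{1}{1-\xi}+\alpha\xi$ and $f_\alpha(x)=\frac{1}{\phi'(\phi^{-1}(x))}$, one has $Q[f_\alpha](x)=0$ for all $x$; (iii) if $g(x,t)$ is a solution of $\partial_t g(x,t)=Q[g(\cdot,t)](x)$, then $$\frac{d}{dt}\int_0^\infty g(x,t)\log\Big(\frac{\alpha g(x,t)}{1-\alpha g(x,t)}\Big)\,dx\le0.$$ *)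

theory Defs
  imports "HOL-Analysis.Analysis"
begin

definition Pi_fun :: "real \<Rightarrow> real" where
  "Pi_fun u = (1 - u) * exp (- (u / (1 - u)))"

definition coll :: "real \<Rightarrow> (real \<Rightarrow> real) \<Rightarrow> real \<Rightarrow> real \<Rightarrow> real \<Rightarrow> real" where
  "coll \<alpha> g x y \<xi> =
     (let x' = (1 - \<xi>) * (x + y) / 2; y' = (1 + \<xi>) * (x + y) / 2 in
      g x' * g y' * Pi_fun (\<alpha> * g x) * Pi_fun (\<alpha> * g y)
      - g x * g y * Pi_fun (\<alpha> * g x') * Pi_fun (\<alpha> * g y'))"

definition Qop :: "real \<Rightarrow> (real \<Rightarrow> real) \<Rightarrow> real \<Rightarrow> real" where
  "Qop \<alpha> g x = 1/2 * (LBINT y:{0..}. (LBINT \<xi>:{-1..1}. coll \<alpha> g x y \<xi>))"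

definition phi :: "real \<Rightarrow> real \<Rightarrow> real" where
  "phi \<alpha> \<xi> = (1 - \<alpha>/2) * ln (1 / (1 - \<xi>)) + \<alpha> * \<xi>"

definition f_alpha :: "real \<Rightarrow> real \<Rightarrow> real" where
  "f_alpha \<alpha> x = 1 / deriv (phi \<alpha>) (the_inv_into {0..<1} (phi \<alpha>) x)"

definition ent :: "real \<Rightarrow> real \<Rightarrow> real" where
  "ent \<alpha> v = v * ln (\<alpha> * v / (1 - \<alpha> * v))"

definition ent' :: "real \<Rightarrow> real \<Rightarrow> real" where
  "ent' \<alpha> v = ln (\<alpha> * v / (1 - \<alpha> * v)) + 1 / (1 - \<alpha> * v)"

end

theory Submission
  imports Defs
begin

text \<open>
  The substitution \<open>x = s a\<close>, \<open>y = s (1 - a)\<close>, \<open>\<xi> = 1 - 2 b\<close> maps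
  \<open>[0, \<infinity>) \<times> [0, 1]\<^sup>2\<close> onto the collision domain \<open>[0, \<infinity>)\<^sup>2 \<times> [-1, 1]\<close> with Jacobian \<open>2 s\<close>.
  In these coordinates the swap \<open>(x, y, \<xi>) \<mapsto> (y, x, -\<xi>)\<close> reflects \<open>a\<close> and \<open>b\<close>, and the reversal
  \<open>(x, y, \<xi>) \<mapsto> (x', y', 1 - 2x/(x + y))\<close> of a collision exchanges \<open>a\<close> and \<open>b\<close>, so both preserve
  Lebesgue measure on the domain. The collision integrand is invariant under the swap and changes sign
  under the reversal, whence
  \<open>\<integral> \<psi>(x) Q[g](x) dx = 1/8 \<integral>\<integral>\<integral> (\<psi>(x) + \<psi>(y) - \<psi>(x') - \<psi>(y')) \<cdot> coll\<close>.
  For \<open>\<psi> = a + b x\<close> the bracket vanishes, giving (i). For the entropy density, \<open>ent'(v)\<close> is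
  \<open>ln (v / \<Pi>(\<alpha> v))\<close> up to a constant, so the bracket has the sign opposite to the integrand and the
  entropy decreases, giving (iii) after differentiating under the integral sign.
  Finally \<open>f_\<alpha>\<close> is in detailed balance, \<open>f_\<alpha>(v) = C exp (-v/c) \<Pi>(\<alpha> f_\<alpha>(v))\<close> with \<open>c = 1 - \<alpha>/2\<close>;
  as \<open>x' + y' = x + y\<close>, this makes the collision integrand vanish identically, giving (ii).
\<close>

section \<open>Changes of variables and differentiation under the integral\<close>

lemma nn_integral_lborel_triple:
  fixes f :: "real \<times> real \<times> real \<Rightarrow> ennreal"
  assumes [measurable]: "f \<in> borel_measurable borel"
  shows "(\<integral>\<^sup>+p. f p \<partial>lborel) = (\<integral>\<^sup>+x. \<integral>\<^sup>+y. \<integral>\<^sup>+z. f (x, y, z) \<partial>lborel \<partial>lborel \<partial>lborel)"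
proof -
  have "(\<integral>\<^sup>+p. f p \<partial>lborel) = (\<integral>\<^sup>+p. f p \<partial>(lborel \<Otimes>\<^sub>M lborel))"
    by (simp add: lborel_prod)
  also have "\<dots> = (\<integral>\<^sup>+x. \<integral>\<^sup>+q. f (x, q) \<partial>lborel \<partial>lborel)"
    by (rule lborel.nn_integral_fst[symmetric]) (simp add: lborel_prod)
  also have "\<dots> = (\<integral>\<^sup>+x. \<integral>\<^sup>+q. f (x, q) \<partial>(lborel \<Otimes>\<^sub>M lborel) \<partial>lborel)"
    by (simp add: lborel_prod)
  also have "\<dots> = (\<integral>\<^sup>+x. \<integral>\<^sup>+y. \<integral>\<^sup>+z. f (x, y, z) \<partial>lborel \<partial>lborel \<partial>lborel)"
    by (intro nn_integral_cong lborel.nn_integral_fst[symmetric]) (simp add: lborel_prod)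
  finally show ?thesis .
qed

lemma nn_integral_quadrant_simplex_coords:
  fixes H :: "real \<Rightarrow> real \<Rightarrow> ennreal"
  assumes [measurable]: "case_prod H \<in> borel_measurable (borel \<Otimes>\<^sub>M borel)"
  shows "(\<integral>\<^sup>+x. \<integral>\<^sup>+y. indicator {0..} x * indicator {0..} y * H x y \<partial>lborel \<partial>lborel) =
    (\<integral>\<^sup>+s. indicator {0..} s * ennreal s * (\<integral>\<^sup>+a. indicator {0..1} a * H (s * a) (s - s * a) \<partial>lborel) \<partial>lborel)"
proof -
  have "(\<integral>\<^sup>+y. indicator {0..} x * indicator {0..} y * H x y \<partial>lborel) =
      (\<integral>\<^sup>+s. indicator {0..} x * indicator {0..} (s - x) * H x (s - x) \<partial>lborel)" for x
  proof -
    have "(\<integral>\<^sup>+y. indicator {0..} x * indicator {0..} y * H x y \<partial>lborel) = ennreal \<bar>1\<bar> *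
        (\<integral>\<^sup>+s. indicator {0..} x * indicator {0..} (- x + 1 * s) * H x (- x + 1 * s) \<partial>lborel)"
      by (rule nn_integral_real_affine) simp_all
    then show ?thesis by simp
  qed
  then have "(\<integral>\<^sup>+x. \<integral>\<^sup>+y. indicator {0..} x * indicator {0..} y * H x y \<partial>lborel \<partial>lborel) =
      (\<integral>\<^sup>+x. \<integral>\<^sup>+s. indicator {0..} x * indicator {0..} (s - x) * H x (s - x) \<partial>lborel \<partial>lborel)"
    by simp
  also have "\<dots> = (\<integral>\<^sup>+s. \<integral>\<^sup>+x. indicator {0..} x * indicator {0..} (s - x) * H x (s - x) \<partial>lborel \<partial>lborel)"
    by (rule lborel_pair.Fubini'[symmetric]) simp
  also have "\<dots> = (\<integral>\<^sup>+s. indicator {0..} s * ennreal s *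
      (\<integral>\<^sup>+a. indicator {0..1} a * H (s * a) (s - s * a) \<partial>lborel) \<partial>lborel)"
  proof (rule nn_integral_cong)
    fix s :: real
    show "(\<integral>\<^sup>+x. indicator {0..} x * indicator {0..} (s - x) * H x (s - x) \<partial>lborel) =
      indicator {0..} s * ennreal s * (\<integral>\<^sup>+a. indicator {0..1} a * H (s * a) (s - s * a) \<partial>lborel)"
    proof (cases "0 < s")
      case True
      have ind: "indicator {0..} (s * a) * indicator {0..} (s - s * a) = (indicator {0..1} a :: ennreal)" for a
        using True by (auto split: split_indicator simp: zero_le_mult_iff mult_le_cancel_left1)
      have "(\<integral>\<^sup>+x. indicator {0..} x * indicator {0..} (s - x) * H x (s - x) \<partial>lborel) = ennreal \<bar>s\<bar> *
          (\<integral>\<^sup>+a. indicator {0..} (0 + s * a) * indicator {0..} (s - (0 + s * a)) *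
            H (0 + s * a) (s - (0 + s * a)) \<partial>lborel)"
        using True by (intro nn_integral_real_affine) simp_all
      then show ?thesis using True by (simp add: ind)
    next
      case False
      have "AE x in lborel. indicator {0..} x * indicator {0..} (s - x) * H x (s - x) = 0"
        using AE_lborel_singleton[of 0] by eventually_elim (use False in \<open>auto split: split_indicator\<close>)
      then have "(\<integral>\<^sup>+x. indicator {0..} x * indicator {0..} (s - x) * H x (s - x) \<partial>lborel) = 0"
        by (simp add: nn_integral_0_iff_AE)
      moreover have "indicator {0..} s * ennreal s = 0"
        using False by (auto split: split_indicator)
      ultimately show ?thesis by simp
    qed
  qed
  finally show ?thesis .
qed

lemma nn_integral_unit_square_swap:
  fixes h :: "real \<Rightarrow> real \<Rightarrow> ennreal"
  assumes [measurable]: "case_prod h \<in> borel_measurable (borel \<Otimes>\<^sub>M borel)"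
  shows "(\<integral>\<^sup>+a. indicator {0..1} a * (\<integral>\<^sup>+b. indicator {0..1} b * h a b \<partial>lborel) \<partial>lborel) =
         (\<integral>\<^sup>+a. indicator {0..1} a * (\<integral>\<^sup>+b. indicator {0..1} b * h b a \<partial>lborel) \<partial>lborel)"
proof -
  have "(\<integral>\<^sup>+a. indicator {0..1} a * (\<integral>\<^sup>+b. indicator {0..1} b * h a b \<partial>lborel) \<partial>lborel) =
      (\<integral>\<^sup>+a. \<integral>\<^sup>+b. indicator {0..1} a * indicator {0..1} b * h a b \<partial>lborel \<partial>lborel)"
    by (intro nn_integral_cong) (simp add: nn_integral_cmult[symmetric] mult.assoc)
  also have "\<dots> = (\<integral>\<^sup>+b. \<integral>\<^sup>+a. indicator {0..1} a * indicator {0..1} b * h a b \<partial>lborel \<partial>lborel)"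
    by (rule lborel_pair.Fubini'[symmetric]) simp
  also have "\<dots> = (\<integral>\<^sup>+a. indicator {0..1} a * (\<integral>\<^sup>+b. indicator {0..1} b * h b a \<partial>lborel) \<partial>lborel)"
    by (intro nn_integral_cong) (simp add: nn_integral_cmult[symmetric] ac_simps)
  finally show ?thesis .
qed

lemma nn_integral_unit_interval_reflect:
  fixes k :: "real \<Rightarrow> ennreal"
  assumes [measurable]: "k \<in> borel_measurable borel"
  shows "(\<integral>\<^sup>+b. indicator {0..1} b * k b \<partial>lborel) = (\<integral>\<^sup>+b. indicator {0..1} b * k (1 - b) \<partial>lborel)"
proof -
  have "(\<integral>\<^sup>+b. indicator {0..1} b * k b \<partial>lborel) = ennreal \<bar>-1\<bar> *
      (\<integral>\<^sup>+b. indicator {0..1} (1 + (-1) * b) * k (1 + (-1) * b) \<partial>lborel)"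
    by (rule nn_integral_real_affine) simp_all
  moreover have "indicator {0..1} (1 + (-1) * b) = (indicator {0..1} b :: ennreal)" for b :: real
    by (auto split: split_indicator)
  ultimately show ?thesis by simp
qed

lemma set_integral_restrict_space_distr_eq:
  fixes F :: "'a \<Rightarrow> 'b::{banach, second_countable_topology}"
  assumes A: "A \<in> sets M"
    and U: "U \<in> restrict_space M A \<rightarrow>\<^sub>M restrict_space M A"
    and distr: "distr (restrict_space M A) (restrict_space M A) U = restrict_space M A"
    and F: "set_integrable M A F"
  shows "set_integrable M A (\<lambda>x. F (U x))" and "(LINT x:A|M. F (U x)) = (LINT x:A|M. F x)"
proof -
  have F': "integrable (restrict_space M A) F"
    using A F by (simp add: set_integrable_eq)
  then have [measurable]: "F \<in> borel_measurable (restrict_space M A)"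
    by (rule borel_measurable_integrable)
  show "set_integrable M A (\<lambda>x. F (U x))"
    using A F' integrable_distr_eq[OF U, of F] by (simp add: distr set_integrable_eq)
  show "(LINT x:A|M. F (U x)) = (LINT x:A|M. F x)"
    using A integral_distr[OF U, of F]
    by (simp add: distr integral_restrict_space set_lebesgue_integral_def)
qed

lemma difference_quotient_bound:
  fixes f f' :: "real \<Rightarrow> real"
  assumes "\<And>s. s \<in> ball t r \<Longrightarrow> (f has_real_derivative f' s) (at s)"
    and "\<And>s. s \<in> ball t r \<Longrightarrow> \<bar>f' s\<bar> \<le> B"
    and "y \<in> ball t r" "y \<noteq> t"
  shows "\<bar>(f y - f t) / (y - t)\<bar> \<le> B"
proof -
  have "0 < r"
    using assms(3) zero_le_dist[of t y] unfolding mem_ball by linarith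
  then have "norm (f y - f t) \<le> B * norm (y - t)"
    using assms
    by (intro field_differentiable_bound[of "ball t r"]) (auto intro: has_field_derivative_at_within)
  with assms(4) show ?thesis
    by (simp add: abs_divide divide_le_eq)
qed

lemma
  fixes f f' :: "'a \<Rightarrow> real \<Rightarrow> real" and bd :: "'a \<Rightarrow> real"
  assumes T: "open T" "t \<in> T"
    and f_int: "\<And>s. s \<in> T \<Longrightarrow> set_integrable M A (\<lambda>x. f x s)"
    and f_deriv: "\<And>s x. s \<in> T \<Longrightarrow> x \<in> A \<Longrightarrow> (f x has_real_derivative f' x s) (at s)"
    and bd_int: "set_integrable M A bd"
    and bd: "\<And>s x. s \<in> T \<Longrightarrow> x \<in> A \<Longrightarrow> \<bar>f' x s\<bar> \<le> bd x"
  shows set_integrable_dominated_derivative: "set_integrable M A (\<lambda>x. f' x t)"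
    and has_real_derivative_set_integral:
      "((\<lambda>s. LINT x:A|M. f x s) has_real_derivative (LINT x:A|M. f' x t)) (at t)"
proof -
  obtain r where r: "0 < r" "ball t r \<subseteq> T"
    using T open_contains_ball by blast
  have quotients: "set_integrable M A (\<lambda>x. f' x t) \<and>
      (\<lambda>i. ((LINT x:A|M. f x (X i)) - (LINT x:A|M. f x t)) / (X i - t)) \<longlonglongrightarrow> (LINT x:A|M. f' x t)"
    if X: "\<And>i. X i \<in> ball t r" "\<And>i. X i \<noteq> t" "X \<longlonglongrightarrow> t" for X
  proof -
    define u where "u i x = indicator A x * ((f x (X i) - f x t) / (X i - t))" for i x
    have XT: "X i \<in> T" for i
      using X(1) r(2) by auto
    have u_eq: "u i = (\<lambda>x. (indicator A x * f x (X i) - indicator A x * f x t) / (X i - t))" for i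
      by (auto simp: u_def fun_eq_iff diff_divide_distrib right_diff_distrib)
    have u_int: "integrable M (u i)" for i
      unfolding u_eq using f_int[OF XT[of i]] f_int[OF T(2)] by (simp add: set_integrable_def)
    have u_lim: "(\<lambda>i. u i x) \<longlonglongrightarrow> indicator A x * f' x t" for x
    proof (cases "x \<in> A")
      case True
      have "((\<lambda>s. (f x s - f x t) / (s - t)) \<longlongrightarrow> f' x t) (at t)"
        using f_deriv[OF T(2) True] by (simp add: has_field_derivative_iff)
      then have "((\<lambda>s. (f x s - f x t) / (s - t)) \<circ> X) \<longlonglongrightarrow> f' x t"
        unfolding tendsto_at_iff_sequentially using X by auto
      with True show ?thesis
        by (simp add: u_def comp_def)
    qed (simp add: u_def)
    have u_bound: "norm (u i x) \<le> indicator A x * bd x" for i x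
    proof (cases "x \<in> A")
      case True
      have "\<bar>(f x (X i) - f x t) / (X i - t)\<bar> \<le> bd x"
        using r(2) True X(1) by (intro difference_quotient_bound[where f' = "f' x"] f_deriv bd X(2)) auto
      with True show ?thesis
        by (simp add: u_def)
    qed (simp add: u_def)
    have u_meas: "u i \<in> borel_measurable M" for i
      using u_int by (rule borel_measurable_integrable)
    have lim_meas: "(\<lambda>x. indicator A x * f' x t) \<in> borel_measurable M"
      using u_lim u_meas by (rule borel_measurable_LIMSEQ_real)
    have bd_int': "integrable M (\<lambda>x. indicator A x * bd x)"
      using bd_int by (simp add: set_integrable_def)
    note dominated = lim_meas u_meas bd_int' AE_I2[OF u_lim] AE_I2[OF u_bound]
    have "integrable M (\<lambda>x. indicator A x * f' x t)"
      by (rule integrable_dominated_convergence[OF dominated])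
    moreover have "(\<lambda>i. integral\<^sup>L M (u i)) \<longlonglongrightarrow> integral\<^sup>L M (\<lambda>x. indicator A x * f' x t)"
      by (rule integral_dominated_convergence[OF dominated])
    moreover have "integral\<^sup>L M (u i) = ((LINT x:A|M. f x (X i)) - (LINT x:A|M. f x t)) / (X i - t)" for i
      unfolding u_eq using f_int[OF XT[of i]] f_int[OF T(2)]
      by (simp add: set_integrable_def set_lebesgue_integral_def)
    ultimately show ?thesis
      by (simp add: set_integrable_def set_lebesgue_integral_def)
  qed
  define Y where "Y i = t + r / real (i + 2)" for i
  have "Y i \<in> ball t r" "Y i \<noteq> t" for i
    using r(1) by (simp_all add: Y_def dist_real_def field_simps add_pos_nonneg)
  moreover have "Y \<longlonglongrightarrow> t"
    unfolding Y_def
    using tendsto_add[OF tendsto_const LIMSEQ_ignore_initial_segment[OF lim_const_over_n[of r], of 2]]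
    by simp
  ultimately show "set_integrable M A (\<lambda>x. f' x t)"
    using quotients by blast
  show "((\<lambda>s. LINT x:A|M. f x s) has_real_derivative (LINT x:A|M. f' x t)) (at t)"
    unfolding has_field_derivative_iff tendsto_at_iff_sequentially
  proof (intro allI impI)
    fix X :: "nat \<Rightarrow> real"
    assume X: "\<forall>i. X i \<in> UNIV - {t}" "X \<longlonglongrightarrow> t"
    have "eventually (\<lambda>i. X i \<in> ball t r) sequentially"
      using topological_tendstoD[OF X(2) open_ball] r(1) by simp
    then obtain N where N: "\<And>i. N \<le> i \<Longrightarrow> X i \<in> ball t r"
      by (auto simp: eventually_sequentially)
    have "(\<lambda>i. ((LINT x:A|M. f x (X (i + N))) - (LINT x:A|M. f x t)) / (X (i + N) - t)) \<longlonglongrightarrow>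
        (LINT x:A|M. f' x t)"
      using quotients[of "\<lambda>i. X (i + N)"] N X LIMSEQ_ignore_initial_segment[OF X(2)] by auto
    then show "((\<lambda>s. ((LINT x:A|M. f x s) - (LINT x:A|M. f x t)) / (s - t)) \<circ> X) \<longlonglongrightarrow> (LINT x:A|M. f' x t)"
      by (simp add: comp_def LIMSEQ_offset[where k = N])
  qed
qed

section \<open>Measure-preserving symmetries of the collision domain\<close>

abbreviation coll_domain :: "(real \<times> real \<times> real) set" where
  "coll_domain \<equiv> {0..} \<times> {0..} \<times> {-1..1}"

abbreviation coll_measure :: "(real \<times> real \<times> real) measure" where
  "coll_measure \<equiv> restrict_space lborel coll_domain"

lemma coll_domain_sets [measurable]: "coll_domain \<in> sets borel"
  by (intro borel_closed closed_Times closed_atLeast closed_atLeastAtMost)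

definition coll_coords_nn_integral :: "(real \<times> real \<times> real \<Rightarrow> ennreal) \<Rightarrow> ennreal" where
  "coll_coords_nn_integral f = (\<integral>\<^sup>+s. indicator {0..} s * ennreal s *
     (\<integral>\<^sup>+a. indicator {0..1} a *
       (\<integral>\<^sup>+b. indicator {0..1} b * f (s * a, s - s * a, 1 - 2 * b) \<partial>lborel) \<partial>lborel) \<partial>lborel)"

lemma nn_integral_coll_domain:
  fixes f :: "real \<times> real \<times> real \<Rightarrow> ennreal"
  assumes [measurable]: "f \<in> borel_measurable borel"
  shows "(\<integral>\<^sup>+p\<in>coll_domain. f p \<partial>lborel) = 2 * coll_coords_nn_integral f"
proof -
  define H where "H x y = 2 * (\<integral>\<^sup>+b. indicator {0..1} b * f (x, y, 1 - 2 * b) \<partial>lborel)" for x y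
  have [measurable]: "case_prod H \<in> borel_measurable (borel \<Otimes>\<^sub>M borel)"
    unfolding H_def by measurable
  have "(\<integral>\<^sup>+z. f (x, y, z) * indicator coll_domain (x, y, z) \<partial>lborel) =
      indicator {0..} x * indicator {0..} y * H x y" for x y
  proof -
    have "(\<integral>\<^sup>+z. indicator {-1..1} z * f (x, y, z) \<partial>lborel) = ennreal \<bar>-2\<bar> *
        (\<integral>\<^sup>+b. indicator {-1..1} (1 + (-2) * b) * f (x, y, 1 + (-2) * b) \<partial>lborel)"
      by (rule nn_integral_real_affine) simp_all
    also have "\<dots> = H x y"
      unfolding H_def by (intro arg_cong2[where f = "(*)"] nn_integral_cong) (auto split: split_indicator)
    finally have "(\<integral>\<^sup>+z. indicator {-1..1} z * f (x, y, z) \<partial>lborel) = H x y" .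
    moreover have "(\<integral>\<^sup>+z. f (x, y, z) * indicator coll_domain (x, y, z) \<partial>lborel) =
        indicator {0..} x * indicator {0..} y * (\<integral>\<^sup>+z. indicator {-1..1} z * f (x, y, z) \<partial>lborel)"
      by (subst nn_integral_cmult[symmetric]) (auto intro!: nn_integral_cong split: split_indicator)
    ultimately show ?thesis by simp
  qed
  then have "(\<integral>\<^sup>+p. f p * indicator coll_domain p \<partial>lborel) =
      (\<integral>\<^sup>+x. \<integral>\<^sup>+y. indicator {0..} x * indicator {0..} y * H x y \<partial>lborel \<partial>lborel)"
    by (subst nn_integral_lborel_triple) simp_all
  also have "\<dots> = (\<integral>\<^sup>+s. indicator {0..} s * ennreal s *
      (\<integral>\<^sup>+a. indicator {0..1} a * H (s * a) (s - s * a) \<partial>lborel) \<partial>lborel)"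
    by (rule nn_integral_quadrant_simplex_coords) measurable
  also have "\<dots> = 2 * coll_coords_nn_integral f"
    unfolding coll_coords_nn_integral_def H_def
    by (subst nn_integral_cmult[symmetric]; simp add: nn_integral_cmult ac_simps)
  finally show ?thesis .
qed

text \<open>The post-collisional pair \<open>(x', y')\<close> collides back to \<open>(x, y)\<close> with the parameter
  \<open>1 - 2 x / (x + y)\<close>.\<close>

definition reverse_coll :: "real \<times> real \<times> real \<Rightarrow> real \<times> real \<times> real" where
  "reverse_coll = (\<lambda>(x, y, \<xi>). ((1 - \<xi>) * (x + y) / 2, (1 + \<xi>) * (x + y) / 2, 1 - 2 * x / (x + y)))"

definition swap_coll :: "real \<times> real \<times> real \<Rightarrow> real \<times> real \<times> real" where
  "swap_coll = (\<lambda>(x, y, \<xi>). (y, x, - \<xi>))"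

lemma reverse_coll_measurable [measurable]: "reverse_coll \<in> borel_measurable borel"
  unfolding reverse_coll_def borel_prod[symmetric] by measurable

lemma swap_coll_measurable [measurable]: "swap_coll \<in> borel_measurable borel"
  unfolding swap_coll_def borel_prod[symmetric] by measurable

lemma reverse_coll_in_coll_domain: "p \<in> coll_domain \<Longrightarrow> reverse_coll p \<in> coll_domain"
proof (cases p)
  case (fields x y \<xi>)
  assume "p \<in> coll_domain"
  then have "0 \<le> x" "0 \<le> y" "-1 \<le> \<xi>" "\<xi> \<le> 1"
    using fields by auto
  moreover from this have "0 \<le> x / (x + y)" "x / (x + y) \<le> 1"
    by (cases "x + y = 0"; simp)+
  ultimately show ?thesis
    using fields by (simp add: reverse_coll_def)
qed

lemma swap_coll_in_coll_domain: "p \<in> coll_domain \<Longrightarrow> swap_coll p \<in> coll_domain"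
  by (cases p) (auto simp: swap_coll_def)

lemma coll_coords_nn_integral_reverse_coll:
  assumes [measurable]: "f \<in> borel_measurable borel"
  shows "coll_coords_nn_integral (\<lambda>p. f (reverse_coll p)) = coll_coords_nn_integral f"
  unfolding coll_coords_nn_integral_def
proof (rule nn_integral_cong)
  fix s :: real
  have "s \<noteq> 0 \<Longrightarrow> reverse_coll (s * a, s - s * a, 1 - 2 * b) = (s * b, s - s * b, 1 - 2 * a)" for a b
    by (simp add: reverse_coll_def field_simps)
  then show "indicator {0..} s * ennreal s * (\<integral>\<^sup>+a. indicator {0..1} a *
      (\<integral>\<^sup>+b. indicator {0..1} b * f (reverse_coll (s * a, s - s * a, 1 - 2 * b)) \<partial>lborel) \<partial>lborel) =
    indicator {0..} s * ennreal s * (\<integral>\<^sup>+a. indicator {0..1} a *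
      (\<integral>\<^sup>+b. indicator {0..1} b * f (s * a, s - s * a, 1 - 2 * b) \<partial>lborel) \<partial>lborel)"
    by (cases "s = 0")
      (simp_all add: nn_integral_unit_square_swap[where h = "\<lambda>a b. f (s * b, s - s * b, 1 - 2 * a)"])
qed

lemma coll_coords_nn_integral_swap_coll:
  assumes [measurable]: "f \<in> borel_measurable borel"
  shows "coll_coords_nn_integral (\<lambda>p. f (swap_coll p)) = coll_coords_nn_integral f"
  unfolding coll_coords_nn_integral_def
proof (rule nn_integral_cong)
  fix s :: real
  let ?I = "\<lambda>F. \<integral>\<^sup>+a. indicator {0..1} a * (\<integral>\<^sup>+b. indicator {0..1} b * F a b \<partial>lborel) \<partial>lborel"
  have "?I (\<lambda>a b. f (swap_coll (s * a, s - s * a, 1 - 2 * b))) =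
      ?I (\<lambda>a b. f (swap_coll (s * (1 - a), s - s * (1 - a), 1 - 2 * b)))"
    by (rule nn_integral_unit_interval_reflect) simp
  also have "\<dots> = ?I (\<lambda>a b. f (swap_coll (s * (1 - a), s - s * (1 - a), 1 - 2 * (1 - b))))"
    by (intro nn_integral_cong arg_cong2[where f = "(*)"] refl nn_integral_unit_interval_reflect) simp
  also have "\<dots> = ?I (\<lambda>a b. f (s * a, s - s * a, 1 - 2 * b))"
    by (simp add: swap_coll_def algebra_simps)
  finally show "indicator {0..} s * ennreal s * ?I (\<lambda>a b. f (swap_coll (s * a, s - s * a, 1 - 2 * b))) =
      indicator {0..} s * ennreal s * ?I (\<lambda>a b. f (s * a, s - s * a, 1 - 2 * b))"
    by simp
qed

lemma coll_measure_preservingI: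
  fixes U :: "real \<times> real \<times> real \<Rightarrow> real \<times> real \<times> real"
  assumes U [measurable]: "U \<in> borel \<rightarrow>\<^sub>M borel"
    and into: "\<And>p. p \<in> coll_domain \<Longrightarrow> U p \<in> coll_domain"
    and inv: "\<And>f. f \<in> borel_measurable borel \<Longrightarrow> coll_coords_nn_integral (\<lambda>p. f (U p)) = coll_coords_nn_integral f"
  shows "U \<in> coll_measure \<rightarrow>\<^sub>M coll_measure" and "distr coll_measure coll_measure U = coll_measure"
proof -
  show U': "U \<in> coll_measure \<rightarrow>\<^sub>M coll_measure"
    by (rule measurable_restrict_space3) (use into in auto)
  have emeasure_coll_measure: "emeasure coll_measure C = (\<integral>\<^sup>+p\<in>coll_domain. indicator C p \<partial>lborel)"
    if "C \<in> sets coll_measure" for C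
    using that
    by (simp add: nn_integral_indicator[symmetric] nn_integral_restrict_space del: nn_integral_indicator)
  show "distr coll_measure coll_measure U = coll_measure"
  proof (rule measure_eqI)
    fix B assume "B \<in> sets (distr coll_measure coll_measure U)"
    then have B: "B \<in> sets coll_measure" and [measurable]: "B \<in> sets borel"
      by (auto simp: sets_restrict_space_iff)
    have "emeasure (distr coll_measure coll_measure U) B = emeasure coll_measure (U -` B \<inter> coll_domain)"
      using B U' by (simp add: emeasure_distr)
    also have "\<dots> = (\<integral>\<^sup>+p\<in>coll_domain. indicator B (U p) \<partial>lborel)"
      using measurable_sets[OF U' B]
      by (simp add: emeasure_coll_measure) (auto intro!: nn_integral_cong split: split_indicator)
    also have "\<dots> = emeasure coll_measure B"
      using B by (simp add: nn_integral_coll_domain inv emeasure_coll_measure)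
    finally show "emeasure (distr coll_measure coll_measure U) B = emeasure coll_measure B" .
  qed simp
qed

lemma reverse_coll_preserving:
  "reverse_coll \<in> coll_measure \<rightarrow>\<^sub>M coll_measure" "distr coll_measure coll_measure reverse_coll = coll_measure"
  by (rule coll_measure_preservingI;
      simp add: reverse_coll_in_coll_domain coll_coords_nn_integral_reverse_coll)+

lemma swap_coll_preserving:
  "swap_coll \<in> coll_measure \<rightarrow>\<^sub>M coll_measure" "distr coll_measure coll_measure swap_coll = coll_measure"
  by (rule coll_measure_preservingI; simp add: swap_coll_in_coll_domain coll_coords_nn_integral_swap_coll)+

lemmas set_integrable_reverse_coll = set_integral_restrict_space_distr_eq(1)[OF
    coll_domain_sets[folded sets_lborel] reverse_coll_preserving]
  and set_integral_reverse_coll = set_integral_restrict_space_distr_eq(2)[OF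
    coll_domain_sets[folded sets_lborel] reverse_coll_preserving]
  and set_integrable_swap_coll = set_integral_restrict_space_distr_eq(1)[OF
    coll_domain_sets[folded sets_lborel] swap_coll_preserving]
  and set_integral_swap_coll = set_integral_restrict_space_distr_eq(2)[OF
    coll_domain_sets[folded sets_lborel] swap_coll_preserving]

section \<open>The weak form of the collision operator\<close>

lemma coll_swap: "coll \<alpha> G y x (- \<xi>) = coll \<alpha> G x y \<xi>"
proof -
  have "(1 - - \<xi>) * (y + x) / 2 = (1 + \<xi>) * (x + y) / 2" "(1 + - \<xi>) * (y + x) / 2 = (1 - \<xi>) * (x + y) / 2"
    by (simp_all add: algebra_simps)
  then show ?thesis
    unfolding coll_def Let_def by (simp only: ac_simps)
qed

lemma reverse_coll_collides_back:
  fixes x y \<xi> :: real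
  defines "s \<equiv> (1 - \<xi>) * (x + y) / 2 + (1 + \<xi>) * (x + y) / 2"
  assumes "0 \<le> x" "0 \<le> y"
  shows "(1 - (1 - 2 * x / (x + y))) * s / 2 = x" and "(1 + (1 - 2 * x / (x + y))) * s / 2 = y"
proof -
  have s: "s = x + y"
    by (simp add: s_def field_simps)
  show "(1 - (1 - 2 * x / (x + y))) * s / 2 = x" "(1 + (1 - 2 * x / (x + y))) * s / 2 = y"
    using assms by (cases "x + y = 0"; simp add: s field_simps)+
qed

lemma coll_reverse:
  assumes "0 \<le> x" "0 \<le> y"
  shows "coll \<alpha> G ((1 - \<xi>) * (x + y) / 2) ((1 + \<xi>) * (x + y) / 2) (1 - 2 * x / (x + y)) = - coll \<alpha> G x y \<xi>"
  using reverse_coll_collides_back[OF assms] by (simp add: coll_def Let_def)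

definition coll_defect :: "(real \<Rightarrow> real) \<Rightarrow> real \<Rightarrow> real \<Rightarrow> real \<Rightarrow> real" where
  "coll_defect \<psi> x y \<xi> = \<psi> x + \<psi> y - \<psi> ((1 - \<xi>) * (x + y) / 2) - \<psi> ((1 + \<xi>) * (x + y) / 2)"

text \<open>Under the measure-preserving maps \<^const>\<open>swap_coll\<close>, \<^const>\<open>reverse_coll\<close> and their
  composition, \<open>\<psi>(x) coll\<close> turns into \<open>\<psi>(y) coll\<close>, \<open>-\<psi>(x') coll\<close> and \<open>-\<psi>(y') coll\<close>.\<close>

lemma coll_weak_form:
  fixes \<psi> G :: "real \<Rightarrow> real"
  assumes int: "set_integrable lborel coll_domain (\<lambda>(x, y, \<xi>). \<psi> x * coll \<alpha> G x y \<xi>)"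
  shows "set_integrable lborel coll_domain (\<lambda>(x, y, \<xi>). coll_defect \<psi> x y \<xi> * coll \<alpha> G x y \<xi>)"
    and "4 * (LINT (x, y, \<xi>):coll_domain|lborel. \<psi> x * coll \<alpha> G x y \<xi>) =
      (LINT (x, y, \<xi>):coll_domain|lborel. coll_defect \<psi> x y \<xi> * coll \<alpha> G x y \<xi>)"
proof -
  define F where "F = (\<lambda>(x, y, \<xi>). \<psi> x * coll \<alpha> G x y \<xi>)"
  have F: "set_integrable lborel coll_domain F"
    using int by (simp add: F_def)
  have FR: "set_integrable lborel coll_domain (\<lambda>p. F (reverse_coll (swap_coll p)))"
    by (intro set_integrable_swap_coll set_integrable_reverse_coll F)
  have defect: "(\<lambda>(x, y, \<xi>). coll_defect \<psi> x y \<xi> * coll \<alpha> G x y \<xi>) p =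
      F p + F (swap_coll p) + F (reverse_coll p) + F (reverse_coll (swap_coll p))" if "p \<in> coll_domain" for p
  proof -
    obtain x y \<xi> where p: "p = (x, y, \<xi>)" by (cases p)
    with that have "0 \<le> x" "0 \<le> y" by auto
    then show ?thesis
      using coll_reverse[of x y \<alpha> G \<xi>] coll_reverse[of y x \<alpha> G "- \<xi>"]
      by (simp add: p F_def coll_defect_def swap_coll_def reverse_coll_def coll_swap algebra_simps)
  qed
  have "set_integrable lborel coll_domain
      (\<lambda>p. F p + F (swap_coll p) + F (reverse_coll p) + F (reverse_coll (swap_coll p)))"
    by (intro set_integral_add set_integrable_swap_coll set_integrable_reverse_coll F FR)
  then show "set_integrable lborel coll_domain (\<lambda>(x, y, \<xi>). coll_defect \<psi> x y \<xi> * coll \<alpha> G x y \<xi>)"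
    by (rule set_integrable_cong[THEN iffD1, rotated -1]) (simp_all add: defect)
  have "(LINT p:coll_domain|lborel. (\<lambda>(x, y, \<xi>). coll_defect \<psi> x y \<xi> * coll \<alpha> G x y \<xi>) p) =
      (LINT p:coll_domain|lborel. F p + F (swap_coll p) + F (reverse_coll p) + F (reverse_coll (swap_coll p)))"
    by (rule set_lebesgue_integral_cong) (simp_all add: defect)
  also have "\<dots> = 4 * (LINT p:coll_domain|lborel. F p)"
    using set_integral_swap_coll[OF set_integrable_reverse_coll[OF F]]
    by (simp add: set_integrable_swap_coll set_integrable_reverse_coll F FR
        set_integral_swap_coll set_integral_reverse_coll)
  finally show "4 * (LINT (x, y, \<xi>):coll_domain|lborel. \<psi> x * coll \<alpha> G x y \<xi>) =
      (LINT (x, y, \<xi>):coll_domain|lborel. coll_defect \<psi> x y \<xi> * coll \<alpha> G x y \<xi>)"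
    by (simp add: F_def)
qed

lemma coll_measurable [measurable (raw)]:
  assumes [measurable]: "G \<in> borel_measurable borel"
    "f \<in> borel_measurable M" "g \<in> borel_measurable M" "h \<in> borel_measurable M"
  shows "(\<lambda>x. coll \<alpha> G (f x) (g x) (h x)) \<in> borel_measurable M"
  unfolding coll_def Let_def Pi_fun_def by measurable

lemma set_integral_mult_Qop:
  fixes c g :: "real \<Rightarrow> real"
  assumes int: "set_integrable lborel coll_domain (\<lambda>(x, y, \<xi>). c x * coll \<alpha> g x y \<xi>)"
    and meas: "set_borel_measurable lborel {0..} (\<lambda>x. c x * Qop \<alpha> g x)"
  shows "(LBINT x:{0..}. c x * Qop \<alpha> g x) = (LINT (x, y, \<xi>):coll_domain|lborel. c x * coll \<alpha> g x y \<xi>) / 2"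
proof -
  define H where "H p = indicator coll_domain p * (case p of (x, y, \<xi>) \<Rightarrow> c x * coll \<alpha> g x y \<xi>)" for p
  have H: "integrable (lborel \<Otimes>\<^sub>M lborel) H"
    using int unfolding set_integrable_def H_def[abs_def] by (simp add: lborel_prod)
  have "AE x in lborel. indicator {0..} x * (c x * Qop \<alpha> g x) = (\<integral>q. H (x, q) \<partial>lborel) / 2"
    using lborel_pair.AE_integrable_fst'[OF H]
  proof eventually_elim
    fix x assume "integrable lborel (\<lambda>q. H (x, q))"
    then have "integrable (lborel \<Otimes>\<^sub>M lborel) (\<lambda>q. H (x, q))"
      by (simp add: lborel_prod)
    then have "(\<integral>q. H (x, q) \<partial>(lborel \<Otimes>\<^sub>M lborel)) = (\<integral>y. \<integral>\<xi>. H (x, y, \<xi>) \<partial>lborel \<partial>lborel)"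
      by (rule lborel_pair.integral_fst'[symmetric])
    then have "(\<integral>q. H (x, q) \<partial>lborel) = (\<integral>y. \<integral>\<xi>. H (x, y, \<xi>) \<partial>lborel \<partial>lborel)"
      by (simp add: lborel_prod)
    also have "\<dots> = (\<integral>y. indicator {0..} x * c x * (indicator {0..} y * (LBINT \<xi>:{-1..1}. coll \<alpha> g x y \<xi>)) \<partial>lborel)"
    proof (rule Bochner_Integration.integral_cong[OF refl])
      fix y
      have "H (x, y, \<xi>) =
          indicator {0..} x * c x * indicator {0..} y * (indicator {-1..1} \<xi> * coll \<alpha> g x y \<xi>)" for \<xi>
        by (simp add: H_def split: split_indicator)
      then show "(\<integral>\<xi>. H (x, y, \<xi>) \<partial>lborel) =
          indicator {0..} x * c x * (indicator {0..} y * (LBINT \<xi>:{-1..1}. coll \<alpha> g x y \<xi>))"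
        by (simp add: set_lebesgue_integral_def)
    qed
    also have "\<dots> = indicator {0..} x * c x * (LBINT y:{0..}. LBINT \<xi>:{-1..1}. coll \<alpha> g x y \<xi>)"
      by (simp add: set_lebesgue_integral_def)
    finally show "indicator {0..} x * (c x * Qop \<alpha> g x) = (\<integral>q. H (x, q) \<partial>lborel) / 2"
      by (simp add: Qop_def)
  qed
  then have "(LBINT x:{0..}. c x * Qop \<alpha> g x) = (\<integral>x. (\<integral>q. H (x, q) \<partial>lborel) / 2 \<partial>lborel)"
    unfolding set_lebesgue_integral_def using meas H
    by (intro integral_cong_AE) (simp_all add: set_borel_measurable_def borel_measurable_integrable)
  also have "\<dots> = (\<integral>p. H p \<partial>(lborel \<Otimes>\<^sub>M lborel)) / 2"
    using lborel_pair.integral_fst'[OF H] by simp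
  finally show ?thesis
    by (simp add: H_def set_lebesgue_integral_def lborel_prod case_prod_beta')
qed

lemma Qop_cong:
  assumes "\<And>v. 0 \<le> v \<Longrightarrow> g v = h v" "0 \<le> x"
  shows "Qop \<alpha> g x = Qop \<alpha> h x"
  unfolding Qop_def
  by (intro arg_cong2[where f = "(*)"] refl set_lebesgue_integral_cong allI impI)
    (auto simp: coll_def assms)

section \<open>Conservation of mass and energy\<close>

lemma set_integrable_coll_domain_product:
  fixes u v :: "real \<Rightarrow> real"
  assumes u: "integrable lborel u" and v: "integrable lborel v"
  shows "set_integrable lborel coll_domain (\<lambda>(x, y, \<xi>). u x * v y)"
proof -
  have [measurable]: "u \<in> borel_measurable borel" "v \<in> borel_measurable borel"
    using u v by (simp_all add: borel_measurable_integrable)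
  have "(\<integral>\<^sup>+p. ennreal (norm (indicator coll_domain p * (case p of (x, y, \<xi>) \<Rightarrow> u x * v y))) \<partial>lborel)
      \<le> (\<integral>\<^sup>+p. (case p of (x, y, \<xi>) \<Rightarrow>
        ennreal (norm (u x)) * ennreal (norm (v y)) * indicator {-1..1::real} \<xi>) \<partial>lborel)"
  proof (rule nn_integral_mono)
    fix p :: "real \<times> real \<times> real"
    obtain x y \<xi> where p: "p = (x, y, \<xi>)" by (cases p)
    have "ennreal (norm (indicator coll_domain p * (u x * v y))) \<le>
        ennreal (norm (u x) * norm (v y) * indicator {-1..1} \<xi>)"
      unfolding p by (intro ennreal_leI) (auto split: split_indicator simp: abs_mult)
    then show "ennreal (norm (indicator coll_domain p * (case p of (x, y, \<xi>) \<Rightarrow> u x * v y))) \<le>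
        (case p of (x, y, \<xi>) \<Rightarrow> ennreal (norm (u x)) * ennreal (norm (v y)) * indicator {-1..1::real} \<xi>)"
      unfolding p by (simp add: ennreal_mult' ennreal_indicator mult.commute)
  qed
  also have "\<dots> = (\<integral>\<^sup>+x. \<integral>\<^sup>+y. \<integral>\<^sup>+\<xi>. ennreal (norm (u x)) * ennreal (norm (v y)) * indicator {-1..1::real} \<xi>
      \<partial>lborel \<partial>lborel \<partial>lborel)"
    by (subst nn_integral_lborel_triple) (simp_all add: split_beta' borel_prod[symmetric])
  also have "\<dots> = (\<integral>\<^sup>+x. ennreal (norm (u x)) \<partial>lborel) * (\<integral>\<^sup>+y. ennreal (norm (v y)) \<partial>lborel) * 2"
    by (simp add: nn_integral_cmult nn_integral_multc mult.assoc)
  also have "\<dots> < \<infinity>"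
    using u v by (simp add: integrable_iff_bounded ennreal_mult_less_top)
  moreover have "(\<lambda>p. indicator coll_domain p * (case p of (x, y, \<xi>) \<Rightarrow> u x * v y)) \<in> borel_measurable lborel"
    unfolding split_beta' measurable_lborel2 borel_prod[symmetric] by measurable
  ultimately show ?thesis
    unfolding set_integrable_def integrable_iff_bounded by simp
qed

lemma Pi_fun_pos: "0 \<le> u \<Longrightarrow> u < 1 \<Longrightarrow> 0 < Pi_fun u"
  by (simp add: Pi_fun_def)

lemma Pi_fun_le_1: "0 \<le> u \<Longrightarrow> u < 1 \<Longrightarrow> Pi_fun u \<le> 1"
  unfolding Pi_fun_def by (rule mult_le_one) simp_all

lemma set_integrable_weighted_coll:
  fixes G :: "real \<Rightarrow> real"
  assumes \<alpha>: "0 < \<alpha>" and G: "\<And>v. 0 \<le> G v" "\<And>v. \<alpha> * G v < 1"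
    and G_int: "integrable lborel G" and moment_int: "integrable lborel (\<lambda>v. v * G v)"
  shows "set_integrable lborel coll_domain (\<lambda>(x, y, \<xi>). (1 + x + y) * coll \<alpha> G x y \<xi>)"
proof -
  have [measurable]: "G \<in> borel_measurable borel"
    using G_int by (simp add: borel_measurable_integrable)
  have Pi: "0 \<le> Pi_fun (\<alpha> * G v)" "Pi_fun (\<alpha> * G v) \<le> 1" for v
    using Pi_fun_pos[of "\<alpha> * G v"] Pi_fun_le_1[of "\<alpha> * G v"] G[of v] \<alpha> by simp_all
  define loss where "loss = (\<lambda>(x, y, \<xi>). (1 + x + y) *
    (G x * G y * Pi_fun (\<alpha> * G ((1 - \<xi>) * (x + y) / 2)) * Pi_fun (\<alpha> * G ((1 + \<xi>) * (x + y) / 2))))"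
  have "set_integrable lborel coll_domain (\<lambda>p. (\<lambda>(x, y, \<xi>). G x * G y) p +
      (\<lambda>(x, y, \<xi>). (x * G x) * G y) p + (\<lambda>(x, y, \<xi>). G x * (y * G y)) p)"
    by (intro set_integral_add set_integrable_coll_domain_product G_int moment_int)
  also have "(\<lambda>p. (\<lambda>(x, y, \<xi>). G x * G y) p + (\<lambda>(x, y, \<xi>). (x * G x) * G y) p + (\<lambda>(x, y, \<xi>). G x * (y * G y)) p) =
      (\<lambda>(x, y, \<xi>). (1 + x + y) * (G x * G y))"
    by (auto simp: algebra_simps)
  finally have loss_int: "set_integrable lborel coll_domain loss"
  proof (rule set_integrable_bound)
    show "set_borel_measurable lborel coll_domain loss"
      unfolding set_borel_measurable_def loss_def split_beta' Pi_fun_def measurable_lborel2 borel_prod[symmetric]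
      by measurable
    show "AE p in lborel. p \<in> coll_domain \<longrightarrow> norm (loss p) \<le> norm ((\<lambda>(x, y, \<xi>). (1 + x + y) * (G x * G y)) p)"
    proof (intro AE_I2 impI)
      fix p assume "p \<in> coll_domain"
      then obtain x y \<xi> where p: "p = (x, y, \<xi>)" and "0 \<le> x" "0 \<le> y" by auto
      let ?B = "(1 + x + y) * (G x * G y)"
        and ?P = "Pi_fun (\<alpha> * G ((1 - \<xi>) * (x + y) / 2)) * Pi_fun (\<alpha> * G ((1 + \<xi>) * (x + y) / 2))"
      have "0 \<le> ?B" "0 \<le> ?P" "?P \<le> 1"
        using G Pi \<open>0 \<le> x\<close> \<open>0 \<le> y\<close> by (simp_all add: mult_le_one)
      moreover have "loss p = ?B * ?P"
        by (simp add: p loss_def ac_simps)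
      ultimately show "norm (loss p) \<le> norm ((\<lambda>(x, y, \<xi>). (1 + x + y) * (G x * G y)) p)"
        by (simp add: p abs_mult mult_left_le)
    qed
  qed
  \<comment> \<open>As \<open>x' + y' = x + y\<close>, the weighted gain term is the weighted loss term after \<^const>\<open>reverse_coll\<close>.\<close>
  have "set_integrable lborel coll_domain (\<lambda>p. loss (reverse_coll p) - loss p)"
    using set_integrable_reverse_coll[OF loss_int] loss_int by (rule set_integral_diff)
  then show ?thesis
  proof (rule set_integrable_cong[THEN iffD1, rotated -1])
    fix p assume "p \<in> coll_domain"
    then obtain x y \<xi> where p: "p = (x, y, \<xi>)" and xy: "0 \<le> x" "0 \<le> y" by auto
    define x' y' where "x' = (1 - \<xi>) * (x + y) / 2" and "y' = (1 + \<xi>) * (x + y) / 2"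
    have "1 + x' + y' = 1 + x + y"
      by (simp add: x'_def y'_def field_simps)
    then have "loss (reverse_coll p) = (1 + x + y) * (G x' * G y' * Pi_fun (\<alpha> * G x) * Pi_fun (\<alpha> * G y))"
      using reverse_coll_collides_back[OF xy, of \<xi>]
      by (simp add: p loss_def reverse_coll_def flip: x'_def y'_def)
    then show "loss (reverse_coll p) - loss p = (\<lambda>(x, y, \<xi>). (1 + x + y) * coll \<alpha> G x y \<xi>) p"
      by (simp add: p loss_def coll_def right_diff_distrib flip: x'_def y'_def)
  qed simp_all
qed

lemma coll_defect_affine: "coll_defect (\<lambda>v. a + b * v) x y \<xi> = 0"
  by (simp add: coll_defect_def field_simps)

lemma set_integral_affine_mult_Qop_eq_0:
  fixes G :: "real \<Rightarrow> real"
  assumes \<alpha>: "0 < \<alpha>" and G: "\<And>v. 0 \<le> G v" "\<And>v. \<alpha> * G v < 1"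
    and G_int: "integrable lborel G" and moment_int: "integrable lborel (\<lambda>v. v * G v)"
  shows "(LBINT x:{0..}. (a + b * x) * Qop \<alpha> G x) = 0"
proof -
  have [measurable]: "G \<in> borel_measurable borel"
    using G_int by (simp add: borel_measurable_integrable)
  have weighted: "set_integrable lborel coll_domain (\<lambda>(x, y, \<xi>). (1 + x + y) * coll \<alpha> G x y \<xi>)"
    by (rule set_integrable_weighted_coll[OF assms])
  have int: "set_integrable lborel coll_domain (\<lambda>(x, y, \<xi>). (a + b * x) * coll \<alpha> G x y \<xi>)"
  proof (rule set_integrable_bound[OF set_integrable_mult_right[OF set_integrable_norm[OF weighted]]])
    show "set_borel_measurable lborel coll_domain (\<lambda>(x, y, \<xi>). (a + b * x) * coll \<alpha> G x y \<xi>)"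
      unfolding set_borel_measurable_def split_beta' measurable_lborel2 borel_prod[symmetric] by measurable
    have "\<bar>a + b * x\<bar> \<le> (\<bar>a\<bar> + \<bar>b\<bar>) * \<bar>1 + x + y\<bar>" if "0 \<le> x" "0 \<le> y" for x y
    proof -
      have "\<bar>a + b * x\<bar> \<le> \<bar>a\<bar> + \<bar>b\<bar> * x"
        using that abs_triangle_ineq[of a "b * x"] by (simp add: abs_mult)
      also have "\<dots> \<le> (\<bar>a\<bar> + \<bar>b\<bar>) * (1 + x + y)"
        using that by (simp add: algebra_simps add_increasing)
      finally show ?thesis
        using that by simp
    qed
    then show "AE p in lborel. p \<in> coll_domain \<longrightarrow> norm ((\<lambda>(x, y, \<xi>). (a + b * x) * coll \<alpha> G x y \<xi>) p) \<le>
        norm ((\<bar>a\<bar> + \<bar>b\<bar>) * norm ((\<lambda>(x, y, \<xi>). (1 + x + y) * coll \<alpha> G x y \<xi>) p))"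
      by (intro AE_I2) (auto simp: abs_mult mult.assoc[symmetric] intro!: mult_right_mono)
  qed
  have "(LBINT x:{0..}. (a + b * x) * Qop \<alpha> G x) =
      (LINT (x, y, \<xi>):coll_domain|lborel. (a + b * x) * coll \<alpha> G x y \<xi>) / 2"
    by (rule set_integral_mult_Qop[OF int])
      (simp add: set_borel_measurable_def Qop_def set_lebesgue_integral_def)
  also have "\<dots> = (LINT (x, y, \<xi>):coll_domain|lborel. coll_defect (\<lambda>v. a + b * v) x y \<xi> * coll \<alpha> G x y \<xi>) / 8"
    using coll_weak_form(2)[OF int] by simp
  also have "\<dots> = 0"
    by (simp add: coll_defect_affine split_beta' set_lebesgue_integral_def)
  finally show ?thesis .
qed

lemma Qop_conserves_mass_and_energy:
  fixes g :: "real \<Rightarrow> real"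
  assumes \<alpha>: "0 < \<alpha>" and g: "\<And>x. 0 \<le> x \<Longrightarrow> 0 \<le> g x \<and> g x < 1 / \<alpha>"
    and g_int: "set_integrable lborel {0..} g" and moment_int: "set_integrable lborel {0..} (\<lambda>x. x * g x)"
  shows "(LBINT x:{0..}. (a + b * x) * Qop \<alpha> g x) = 0"
proof -
  \<comment> \<open>Truncating \<open>g\<close> to \<open>[0, \<infinity>)\<close>, the only region \<^const>\<open>Qop\<close> reads on \<open>x \<ge> 0\<close>,
    makes it globally integrable.\<close>
  define g0 where "g0 v = indicator {0..} v * g v" for v
  have "0 \<le> g0 v \<and> \<alpha> * g0 v < 1" for v
    using g[of v] \<alpha> by (cases "0 \<le> v") (simp_all add: g0_def pos_less_divide_eq mult.commute)
  moreover have "integrable lborel g0" "integrable lborel (\<lambda>v. v * g0 v)"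
    using g_int moment_int unfolding set_integrable_def g0_def[abs_def] by (simp_all add: mult.left_commute)
  ultimately have "(LBINT x:{0..}. (a + b * x) * Qop \<alpha> g0 x) = 0"
    using \<alpha> by (intro set_integral_affine_mult_Qop_eq_0) simp_all
  moreover have "(LBINT x:{0..}. (a + b * x) * Qop \<alpha> g x) = (LBINT x:{0..}. (a + b * x) * Qop \<alpha> g0 x)"
    by (intro set_lebesgue_integral_cong allI impI arg_cong2[where f = "(*)"] refl Qop_cong) (simp_all add: g0_def)
  ultimately show ?thesis
    by simp
qed

section \<open>The equilibrium \<open>f_\<alpha>\<close>\<close>

lemma coll_eq_0_of_detailed_balance:
  assumes balance: "\<And>v. 0 \<le> v \<Longrightarrow> G v = C * exp (- \<beta> * v) * Pi_fun (\<alpha> * G v)"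
    and "0 \<le> x" "0 \<le> y" "-1 \<le> \<xi>" "\<xi> \<le> 1"
  shows "coll \<alpha> G x y \<xi> = 0"
proof -
  define P where "P v = Pi_fun (\<alpha> * G v)" for v
  define x' y' where "x' = (1 - \<xi>) * (x + y) / 2" and "y' = (1 + \<xi>) * (x + y) / 2"
  have "0 \<le> x'" "0 \<le> y'"
    using assms by (simp_all add: x'_def y'_def)
  have G: "G v = C * exp (- \<beta> * v) * P v" if "0 \<le> v" for v
    using balance[OF that] by (simp add: P_def)
  have energy: "exp (- \<beta> * x') * exp (- \<beta> * y') = exp (- \<beta> * x) * exp (- \<beta> * y)"
    by (simp add: x'_def y'_def flip: exp_add) (simp add: field_simps)
  have "coll \<alpha> G x y \<xi> = G x' * G y' * P x * P y - G x * G y * P x' * P y'"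
    by (simp add: coll_def Let_def P_def x'_def y'_def)
  also have "\<dots> = C * C * (exp (- \<beta> * x') * exp (- \<beta> * y')) * (P x * P y * P x' * P y') -
      C * C * (exp (- \<beta> * x) * exp (- \<beta> * y)) * (P x * P y * P x' * P y')"
    using assms \<open>0 \<le> x'\<close> \<open>0 \<le> y'\<close> by (simp add: G ac_simps del: mult_minus_left)
  also have "\<dots> = 0"
    by (simp only: energy diff_self)
  finally show ?thesis .
qed

lemma phi_has_real_derivative:
  assumes "\<xi> < 1"
  shows "(phi \<alpha> has_real_derivative (1 - \<alpha>/2) / (1 - \<xi>) + \<alpha>) (at \<xi>)"
proof -
  have "(1 - \<xi>) * (1 - \<xi>) \<noteq> 0"
    using assms by simp
  then have "1 + \<xi> * \<xi> - \<xi> * 2 \<noteq> 0"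
    by (simp add: algebra_simps)
  with assms show ?thesis
    unfolding phi_def[abs_def] by - (rule derivative_eq_intros refl | simp)+
qed

lemma phi_strict_mono_on:
  assumes "0 < \<alpha>" "\<alpha> < 2"
  shows "strict_mono_on {0..<1} (phi \<alpha>)"
proof (rule strict_mono_onI)
  fix a b :: real assume "a \<in> {0..<1}" "b \<in> {0..<1}" "a < b"
  then have "ln (1 / (1 - a)) < ln (1 / (1 - b))"
    by (simp add: frac_less2)
  with assms \<open>a < b\<close> show "phi \<alpha> a < phi \<alpha> b"
    unfolding phi_def by (intro add_strict_mono) simp_all
qed

lemma phi_surj:
  assumes "0 < \<alpha>" "\<alpha> < 2" "0 \<le> v"
  obtains \<xi> where "0 \<le> \<xi>" "\<xi> < 1" "phi \<alpha> \<xi> = v"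
proof -
  define b where "b = 1 - exp (- v / (1 - \<alpha>/2))"
  have b: "0 \<le> b" "b < 1"
    using assms by (simp_all add: b_def)
  have "phi \<alpha> b = v + \<alpha> * b"
    using assms by (simp add: phi_def b_def ln_div)
  then have "phi \<alpha> 0 \<le> v" "v \<le> phi \<alpha> b"
    using assms b by (simp_all add: phi_def)
  moreover have "\<forall>x. 0 \<le> x \<and> x \<le> b \<longrightarrow> isCont (phi \<alpha>) x"
    using b by (auto intro!: DERIV_isCont phi_has_real_derivative)
  ultimately obtain \<xi> where "0 \<le> \<xi>" "\<xi> \<le> b" "phi \<alpha> \<xi> = v"
    using IVT[of "phi \<alpha>" 0 v b] b by auto
  with b that show ?thesis by simp
qed

lemma f_alpha_phi:
  assumes "0 < \<alpha>" "\<alpha> < 2" "0 \<le> \<xi>" "\<xi> < 1"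
  shows "f_alpha \<alpha> (phi \<alpha> \<xi>) = 1 / ((1 - \<alpha>/2) / (1 - \<xi>) + \<alpha>)"
proof -
  have "the_inv_into {0..<1} (phi \<alpha>) (phi \<alpha> \<xi>) = \<xi>"
    using assms strict_mono_on_imp_inj_on[OF phi_strict_mono_on] by (intro the_inv_into_f_f) auto
  moreover have "deriv (phi \<alpha>) \<xi> = (1 - \<alpha>/2) / (1 - \<xi>) + \<alpha>"
    using phi_has_real_derivative[OF assms(4)] by (rule DERIV_imp_deriv)
  ultimately show ?thesis
    by (simp add: f_alpha_def)
qed

lemma f_alpha_detailed_balance:
  assumes \<alpha>: "0 < \<alpha>" "\<alpha> < 2" and "0 \<le> v"
  defines "c \<equiv> 1 - \<alpha>/2"
  shows "f_alpha \<alpha> v = exp (\<alpha> / c) / c * exp (- (1 / c) * v) * Pi_fun (\<alpha> * f_alpha \<alpha> v)"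
proof -
  obtain \<xi> where \<xi>: "0 \<le> \<xi>" "\<xi> < 1" and v: "v = phi \<alpha> \<xi>"
    using phi_surj[OF \<alpha> \<open>0 \<le> v\<close>] by metis
  define d where "d = c + \<alpha> * (1 - \<xi>)"
  have c: "0 < c" and "0 < 1 - \<xi>"
    using \<alpha> \<xi> by (simp_all add: c_def)
  then have d: "0 < d"
    using \<alpha> by (simp add: d_def add_pos_pos)
  have f: "f_alpha \<alpha> v = (1 - \<xi>) / d"
    using f_alpha_phi[OF \<alpha> \<xi>] \<open>0 < 1 - \<xi>\<close> by (simp add: v d_def c_def[symmetric] field_simps)
  have "1 - \<alpha> * f_alpha \<alpha> v = c / d"
    using d by (simp add: f d_def field_simps)
  moreover from this have "\<alpha> * f_alpha \<alpha> v / (1 - \<alpha> * f_alpha \<alpha> v) = \<alpha> * (1 - \<xi>) / c"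
    using c d by (simp add: f)
  ultimately have P: "Pi_fun (\<alpha> * f_alpha \<alpha> v) = c / d * exp (- (\<alpha> * (1 - \<xi>) / c))"
    by (simp add: Pi_fun_def)
  have E: "exp (- (1 / c) * v) = (1 - \<xi>) * exp (- (\<alpha> * \<xi> / c))"
  proof -
    have "- (1 / c) * v = - ln (1 / (1 - \<xi>)) - \<alpha> * \<xi> / c"
      using c by (simp add: v phi_def c_def[symmetric] field_simps)
    then show ?thesis
      using \<open>0 < 1 - \<xi>\<close> by (simp add: exp_diff exp_minus ln_div divide_inverse)
  qed
  have X: "exp (\<alpha> / c) * exp (- (\<alpha> * \<xi> / c)) * exp (- (\<alpha> * (1 - \<xi>) / c)) = 1"
    using c by (simp flip: exp_add) (simp add: field_simps)
  have "exp (\<alpha> / c) / c * ((1 - \<xi>) * exp (- (\<alpha> * \<xi> / c))) * (c / d * exp (- (\<alpha> * (1 - \<xi>) / c))) =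
      (1 - \<xi>) / d * (exp (\<alpha> / c) * exp (- (\<alpha> * \<xi> / c)) * exp (- (\<alpha> * (1 - \<xi>) / c)))"
    using c d by (simp add: field_simps)
  then have "exp (\<alpha> / c) / c * exp (- (1 / c) * v) * Pi_fun (\<alpha> * f_alpha \<alpha> v) = (1 - \<xi>) / d"
    by (simp only: P E X mult_1_right)
  then show ?thesis
    by (simp add: f)
qed

lemma Qop_f_alpha_eq_0:
  assumes "0 < \<alpha>" "\<alpha> < 2" "0 \<le> x"
  shows "Qop \<alpha> (f_alpha \<alpha>) x = 0"
proof -
  have "(LBINT \<xi>:{-1..1}. coll \<alpha> (f_alpha \<alpha>) x y \<xi>) = 0" if "0 \<le> y" for y
    using coll_eq_0_of_detailed_balance[OF f_alpha_detailed_balance[OF assms(1,2)]] assms that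
      set_lebesgue_integral_cong[of "{-1..1}" lborel "coll \<alpha> (f_alpha \<alpha>) x y" "\<lambda>_. 0"]
    by (simp add: set_lebesgue_integral_def)
  then show ?thesis
    using set_lebesgue_integral_cong[of "{0..}" lborel "\<lambda>y. LBINT \<xi>:{-1..1}. coll \<alpha> (f_alpha \<alpha>) x y \<xi>" "\<lambda>_. 0"]
    by (simp add: Qop_def set_lebesgue_integral_def)
qed

section \<open>Entropy dissipation\<close>

lemma ent_has_real_derivative:
  assumes "0 < \<alpha>" "0 < v" "\<alpha> * v < 1"
  shows "(ent \<alpha> has_real_derivative ent' \<alpha> v) (at v)"
proof -
  have "\<alpha> * v * ((1 - \<alpha> * v) * (1 - \<alpha> * v)) \<noteq> 0"
    using assms by simp
  then show ?thesis
    unfolding ent_def[abs_def] ent'_def using assms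
    by (auto intro!: derivative_eq_intros simp: field_simps)
qed

lemma ent'_eq_ln_Pi_fun:
  assumes "0 < \<alpha>" "0 < v" "\<alpha> * v < 1"
  shows "ent' \<alpha> v = ln \<alpha> + 1 + ln v - ln (Pi_fun (\<alpha> * v))"
proof -
  have "0 < 1 - \<alpha> * v"
    using assms by simp
  moreover have "1 / (1 - \<alpha> * v) = 1 + \<alpha> * v / (1 - \<alpha> * v)"
    using \<open>0 < 1 - \<alpha> * v\<close> by (simp add: field_simps)
  ultimately show ?thesis
    using assms by (simp add: ent'_def Pi_fun_def ln_mult ln_div)
qed

text \<open>Writing \<open>coll = A - B\<close>, the defect of \<open>ent'\<close> is \<open>ln B - ln A\<close>, as \<open>ent'\<close> is
  \<open>ln (v / \<Pi>(\<alpha> v))\<close> up to a constant.\<close>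

lemma coll_entropy_dissipation:
  assumes \<alpha>: "0 < \<alpha>" and G: "\<And>v. 0 \<le> v \<Longrightarrow> 0 < G v \<and> \<alpha> * G v < 1"
    and "0 \<le> x" "0 \<le> y" "-1 \<le> \<xi>" "\<xi> \<le> 1"
  shows "coll_defect (\<lambda>v. ent' \<alpha> (G v)) x y \<xi> * coll \<alpha> G x y \<xi> \<le> 0"
proof -
  define P where "P v = Pi_fun (\<alpha> * G v)" for v
  define x' y' where "x' = (1 - \<xi>) * (x + y) / 2" and "y' = (1 + \<xi>) * (x + y) / 2"
  have nonneg: "0 \<le> x" "0 \<le> y" "0 \<le> x'" "0 \<le> y'"
    using assms by (simp_all add: x'_def y'_def)
  have pos: "0 < G v" "0 < P v" if "0 \<le> v" for v
    using G[OF that] \<alpha> by (simp_all add: P_def Pi_fun_pos)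
  have ent': "ent' \<alpha> (G v) = ln \<alpha> + 1 + ln (G v) - ln (P v)" if "0 \<le> v" for v
    using G[OF that] \<alpha> by (simp add: P_def ent'_eq_ln_Pi_fun)
  define A B where "A = G x' * G y' * P x * P y" and "B = G x * G y * P x' * P y'"
  note pos = pos[OF nonneg(1)] pos[OF nonneg(2)] pos[OF nonneg(3)] pos[OF nonneg(4)]
  have "0 < A" "0 < B"
    using pos by (simp_all add: A_def B_def)
  have "ln A = ln (G x') + ln (G y') + ln (P x) + ln (P y)"
    using pos by (simp add: A_def ln_mult)
  moreover have "ln B = ln (G x) + ln (G y) + ln (P x') + ln (P y')"
    using pos by (simp add: B_def ln_mult)
  ultimately have "coll_defect (\<lambda>v. ent' \<alpha> (G v)) x y \<xi> = ln B - ln A"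
    using nonneg by (simp add: coll_defect_def ent' flip: x'_def y'_def)
  moreover have "coll \<alpha> G x y \<xi> = A - B"
    by (simp add: coll_def Let_def A_def B_def P_def x'_def y'_def)
  moreover have "(ln B - ln A) * (A - B) \<le> 0"
    using \<open>0 < A\<close> \<open>0 < B\<close>
    by (cases "B \<le> A") (simp_all add: mult_nonpos_nonneg mult_nonneg_nonpos)
  ultimately show ?thesis
    by simp
qed

lemma entropy_production_nonpos:
  assumes \<alpha>: "0 < \<alpha>" and G: "\<And>v. 0 \<le> v \<Longrightarrow> 0 < G v \<and> \<alpha> * G v < 1"
    and int: "set_integrable lborel coll_domain (\<lambda>(x, y, \<xi>). ent' \<alpha> (G x) * coll \<alpha> G x y \<xi>)"
    and production_int: "set_integrable lborel {0..} (\<lambda>x. ent' \<alpha> (G x) * Qop \<alpha> G x)"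
  shows "(LBINT x:{0..}. ent' \<alpha> (G x) * Qop \<alpha> G x) \<le> 0"
proof -
  have meas: "set_borel_measurable lborel {0..} (\<lambda>x. ent' \<alpha> (G x) * Qop \<alpha> G x)"
    using production_int unfolding set_integrable_def set_borel_measurable_def
    by (rule borel_measurable_integrable)
  have "(LBINT x:{0..}. ent' \<alpha> (G x) * Qop \<alpha> G x) =
      (LINT (x, y, \<xi>):coll_domain|lborel. ent' \<alpha> (G x) * coll \<alpha> G x y \<xi>) / 2"
    by (rule set_integral_mult_Qop[OF int meas])
  also have "\<dots> = (LINT (x, y, \<xi>):coll_domain|lborel. coll_defect (\<lambda>v. ent' \<alpha> (G v)) x y \<xi> * coll \<alpha> G x y \<xi>) / 8"
    using coll_weak_form(2)[OF int] by simp
  also have "\<dots> \<le> (LINT p:coll_domain|lborel. 0) / 8"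
    using coll_entropy_dissipation[OF \<alpha> G]
    by (intro divide_right_mono set_integral_mono coll_weak_form(1)[OF int]) (auto simp: set_integrable_def)
  finally show ?thesis
    by (simp add: set_lebesgue_integral_def)
qed

lemma
  fixes g :: "real \<Rightarrow> real \<Rightarrow> real" and bd :: "real \<Rightarrow> real"
  assumes \<alpha>: "0 < \<alpha>" and T: "open T" "t \<in> T"
    and g: "\<And>s x. s \<in> T \<Longrightarrow> 0 \<le> x \<Longrightarrow> 0 < g x s \<and> \<alpha> * g x s < 1"
    and g_deriv: "\<And>s x. s \<in> T \<Longrightarrow> 0 \<le> x \<Longrightarrow> ((\<lambda>r. g x r) has_real_derivative Qop \<alpha> (\<lambda>y. g y s) x) (at s)"
    and ent_int: "\<And>s. s \<in> T \<Longrightarrow> set_integrable lborel {0..} (\<lambda>x. ent \<alpha> (g x s))"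
    and bd_int: "set_integrable lborel {0..} bd"
    and bd: "\<And>s x. s \<in> T \<Longrightarrow> 0 \<le> x \<Longrightarrow> \<bar>ent' \<alpha> (g x s) * Qop \<alpha> (\<lambda>y. g y s) x\<bar> \<le> bd x"
  shows set_integrable_entropy_production:
      "set_integrable lborel {0..} (\<lambda>x. ent' \<alpha> (g x t) * Qop \<alpha> (\<lambda>y. g y t) x)"
    and entropy_has_real_derivative: "((\<lambda>s. LBINT x:{0..}. ent \<alpha> (g x s)) has_real_derivative
      (LBINT x:{0..}. ent' \<alpha> (g x t) * Qop \<alpha> (\<lambda>y. g y t) x)) (at t)"
proof -
  have "((\<lambda>r. ent \<alpha> (g x r)) has_real_derivative ent' \<alpha> (g x s) * Qop \<alpha> (\<lambda>y. g y s) x) (at s)"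
    if "s \<in> T" "x \<in> {0..}" for s x
    using DERIV_chain2[OF ent_has_real_derivative g_deriv] \<alpha> g that by simp
  note leibniz = T ent_int this bd_int bd
  show "set_integrable lborel {0..} (\<lambda>x. ent' \<alpha> (g x t) * Qop \<alpha> (\<lambda>y. g y t) x)"
    by (rule set_integrable_dominated_derivative[OF leibniz]) auto
  show "((\<lambda>s. LBINT x:{0..}. ent \<alpha> (g x s)) has_real_derivative
      (LBINT x:{0..}. ent' \<alpha> (g x t) * Qop \<alpha> (\<lambda>y. g y t) x)) (at t)"
    by (rule has_real_derivative_set_integral[OF leibniz]) auto
qed

lemma entropy_has_nonpos_derivative:
  fixes g :: "real \<Rightarrow> real \<Rightarrow> real" and bd :: "real \<Rightarrow> real"
  assumes \<alpha>: "0 < \<alpha>" and T: "open T" "t \<in> T"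
    and g_bounds: "\<And>s x. s \<in> T \<Longrightarrow> 0 \<le> x \<Longrightarrow> 0 < g x s \<and> g x s < 1 / \<alpha>"
    and g_deriv: "\<And>s x. s \<in> T \<Longrightarrow> 0 \<le> x \<Longrightarrow> ((\<lambda>r. g x r) has_real_derivative Qop \<alpha> (\<lambda>y. g y s) x) (at s)"
    and ent_int: "\<And>s. s \<in> T \<Longrightarrow> set_integrable lborel {0..} (\<lambda>x. ent \<alpha> (g x s))"
    and bd_int: "set_integrable lborel {0..} bd"
    and bd: "\<And>s x. s \<in> T \<Longrightarrow> 0 \<le> x \<Longrightarrow> \<bar>ent' \<alpha> (g x s) * Qop \<alpha> (\<lambda>y. g y s) x\<bar> \<le> bd x"
    and coll_int: "set_integrable lborel coll_domain (\<lambda>(x, y, \<xi>). ent' \<alpha> (g x t) * coll \<alpha> (\<lambda>z. g z t) x y \<xi>)"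
  shows "\<exists>D. ((\<lambda>s. LBINT x:{0..}. ent \<alpha> (g x s)) has_real_derivative D) (at t) \<and> D \<le> 0"
proof -
  have g: "0 < g x s \<and> \<alpha> * g x s < 1" if "s \<in> T" "0 \<le> x" for s x
    using g_bounds[OF that] \<alpha> by (simp add: pos_less_divide_eq mult.commute)
  note entropy = \<alpha> T g g_deriv ent_int bd_int bd
  have "(LBINT x:{0..}. ent' \<alpha> (g x t) * Qop \<alpha> (\<lambda>y. g y t) x) \<le> 0"
    by (rule entropy_production_nonpos[OF \<alpha> g[OF \<open>t \<in> T\<close>] coll_int
          set_integrable_entropy_production[OF entropy]])
  with entropy_has_real_derivative[OF entropy] show ?thesis
    by blast
qed

theorem theorem4p4:
  fixes \<alpha> :: real
  assumes "0 < \<alpha>" and "\<alpha> < 2"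
  shows
   "(\<forall>(g :: real \<Rightarrow> real) (a :: real) (b :: real).
       (\<forall>x\<ge>0. 0 \<le> g x \<and> g x < 1/\<alpha>) \<and>
       set_integrable lborel {0..} g \<and>
       set_integrable lborel {0..} (\<lambda>x. x * g x) \<and>
       (LBINT x:{0..}. x * g x) = 1
       \<longrightarrow> (LBINT x:{0..}. (a + b * x) * Qop \<alpha> g x) = 0)
    \<and> (\<forall>x\<ge>0. Qop \<alpha> (f_alpha \<alpha>) x = 0)
    \<and> (\<forall>(g :: real \<Rightarrow> real \<Rightarrow> real) (T :: real set) (t :: real).
       open T \<and> t \<in> T \<and>
       (\<forall>s\<in>T. \<forall>x\<ge>0. 0 < g x s \<and> g x s < 1/\<alpha>) \<and>
       (\<forall>s\<in>T. \<forall>x\<ge>0. ((\<lambda>r. g x r) has_real_derivative Qop \<alpha> (\<lambda>y. g y s) x) (at s)) \<and>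
       (\<forall>s\<in>T. set_integrable lborel {0..} (\<lambda>x. ent \<alpha> (g x s))) \<and>
       (\<exists>bd. set_integrable lborel {0..} bd \<and>
          (\<forall>s\<in>T. \<forall>x\<ge>0. \<bar>ent' \<alpha> (g x s) * Qop \<alpha> (\<lambda>y. g y s) x\<bar> \<le> bd x)) \<and>
       set_integrable lborel ({0..} \<times> {0..} \<times> {-1..1})
          (\<lambda>(x, y, \<xi>). ent' \<alpha> (g x t) * coll \<alpha> (\<lambda>z. g z t) x y \<xi>)
       \<longrightarrow> (\<exists>D. ((\<lambda>s. LBINT x:{0..}. ent \<alpha> (g x s)) has_real_derivative D) (at t)
                \<and> D \<le> 0))"
proof (intro conjI allI impI, goal_cases)
  case (1 g a b)
  then show ?case
    using \<open>0 < \<alpha>\<close> by (intro Qop_conserves_mass_and_energy) auto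
next
  case (2 x)
  with assms show ?case
    by (intro Qop_f_alpha_eq_0)
next
  case (3 g T t)
  then obtain bd where "set_integrable lborel {0..} bd"
    and "\<forall>s\<in>T. \<forall>x\<ge>0. \<bar>ent' \<alpha> (g x s) * Qop \<alpha> (\<lambda>y. g y s) x\<bar> \<le> bd x"
    by blast
  with 3 \<open>0 < \<alpha>\<close> show ?case
    by (intro entropy_has_nonpos_derivative[where bd = bd]) auto
qed

end
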